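(* Let $n\ge1$ and $1\le p\le n$. A configuration $C\in\mathcal{S}(n,p)$ is $p$-toppleable if and only if for every $1\le i\le n+1$, $p+i-n-1\le C^{-1}(i)\le p+i-1$, where $C^{-1}(i)$ is the site of chip $i$ in $C$.
   Context: Sites are $0,\dots,n+1$. A configuration in $\mathcal{S}(n,p)$ places $n+1$ distinct chips labeled $1,\dots,n+1$ with sites $0,n+1$ empty, one chip at each site of $\{1,\dots,n\}\setminus\{p\}$ and two chips at site $p$. Toppling: while some site holds at least two chips, choose such a site $i$ and two chips $\alpha<\beta$ there and move $\alpha$ to $i-1$, $\beta$ to $i+1$. It is known this terminates with at most one chip per site within sites $0,\dots,n+1$, and the final configuration is independent of the choices. $C$ is $p$-toppleable if reading the labels of the final configuration from left to right gives $1,2,\dots,n+1$ in increasing order. *)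

theory Defs
  imports Main
begin

text \<open>A configuration assigns to each chip c in {1..n+1} its site C c (an integer).
  Values of C outside the chips {1..n+1} are irrelevant.\<close>

definition in_S :: "nat \<Rightarrow> nat \<Rightarrow> (nat \<Rightarrow> int) \<Rightarrow> bool" where
  "in_S n p C \<longleftrightarrow>
     (\<forall>c\<in>{1..n+1}. C c \<in> {1..int n}) \<and>
     (\<forall>s\<in>{1..n}. card {c\<in>{1..n+1}. C c = int s} = (if s = p then 2 else 1))"

definition topple_step :: "nat \<Rightarrow> (nat \<Rightarrow> int) \<Rightarrow> (nat \<Rightarrow> int) \<Rightarrow> bool" where
  "topple_step n C C' \<longleftrightarrow>
     (\<exists>\<alpha> \<beta>. \<alpha> \<in> {1..n+1} \<and> \<beta> \<in> {1..n+1} \<and> \<alpha> < \<beta> \<and> C \<alpha> = C \<beta> \<and>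
        C' = C(\<alpha> := C \<alpha> - 1, \<beta> := C \<beta> + 1))"

definition stable :: "nat \<Rightarrow> (nat \<Rightarrow> int) \<Rightarrow> bool" where
  "stable n C \<longleftrightarrow> (\<forall>\<alpha>\<in>{1..n+1}. \<forall>\<beta>\<in>{1..n+1}. \<alpha> \<noteq> \<beta> \<longrightarrow> C \<alpha> \<noteq> C \<beta>)"

definition labels_increasing :: "nat \<Rightarrow> (nat \<Rightarrow> int) \<Rightarrow> bool" where
  "labels_increasing n C \<longleftrightarrow> (\<forall>\<alpha>\<in>{1..n+1}. \<forall>\<beta>\<in>{1..n+1}. \<alpha> < \<beta> \<longrightarrow> C \<alpha> < C \<beta>)"

text \<open>p-toppleable: the final (stable) configuration reached by toppling has labels in
  increasing order. Since the final configuration is known to exist and be unique, we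
  state this as existence of a toppling sequence to a stable, increasing configuration.\<close>
definition toppleable :: "nat \<Rightarrow> (nat \<Rightarrow> int) \<Rightarrow> bool" where
  "toppleable n C \<longleftrightarrow>
     (\<exists>F. (topple_step n)\<^sup>*\<^sup>* C F \<and> stable n F \<and> labels_increasing n F)"

end

theory Submission
  imports Defs "HOL-Library.Confluence"
begin

text \<open>Call a configuration balanced if for every \<open>-1 \<le> x \<le> n + 1\<close> the number of chips on
  the sites \<open>\<le> x\<close> is \<open>x\<close> or \<open>x + 1\<close>. Configurations of \<open>\<S>(n, p)\<close> are balanced and
  toppling preserves this. In a balanced configuration no site holds three chips, so two
  different topplings act on disjoint pairs of chips and commute; toppling is therefore strongly
  confluent, and whether a configuration is toppleable does not depend on the toppling order
  (no termination argument is needed).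

  We topple in passes. Before pass \<open>r\<close> the chips \<open>1, \<dots>, r\<close> sit on \<open>0, \<dots>, r - 1\<close>,
  site \<open>r\<close> is empty and site \<open>p + r\<close> is the only double site. The pass topples leftwards
  from \<open>p + r\<close> until a chip reaches \<open>r\<close>: the smallest chip \<open>m\<close> of the block on the sites
  \<open>r + 1, \<dots>, p + r\<close> lands on \<open>r\<close> and the others move to \<open>r + 2, \<dots>, p + r + 1\<close>. If
  \<open>m \<noteq> r + 1\<close>, the sites \<open>0, \<dots>, r\<close> are frozen from then on with \<open>m\<close> to the left of chip
  \<open>r + 1\<close>, so the result is not sorted. If \<open>m = r + 1\<close>, the window condition for the chips
  \<open>> r\<close> before the pass is equivalent to the window condition, with lower ends raised by one,
  for the chips \<open>> r + 1\<close> after it; after the last pass the configuration is stable and the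
  window condition says exactly that it is sorted.\<close>

definition chips_upto :: "nat \<Rightarrow> (nat \<Rightarrow> int) \<Rightarrow> int \<Rightarrow> int" where
  "chips_upto n E x = int (card {c\<in>{1..n+1}. E c \<le> x})"

definition chips_at :: "nat \<Rightarrow> (nat \<Rightarrow> int) \<Rightarrow> int \<Rightarrow> nat" where
  "chips_at n E t = card {c\<in>{1..n+1}. E c = t}"

definition balanced :: "nat \<Rightarrow> (nat \<Rightarrow> int) \<Rightarrow> bool" where
  "balanced n E \<longleftrightarrow> (\<forall>x\<in>{-1..int n + 1}. x \<le> chips_upto n E x \<and> chips_upto n E x \<le> x + 1)"

lemma chips_upto_succ: "chips_upto n E x = chips_upto n E (x - 1) + int (chips_at n E x)"
proof -
  have "{c\<in>{1..n+1}. E c \<le> x} = {c\<in>{1..n+1}. E c \<le> x - 1} \<union> {c\<in>{1..n+1}. E c = x}"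
    by auto
  then have "card {c\<in>{1..n+1}. E c \<le> x} = card {c\<in>{1..n+1}. E c \<le> x - 1} + card {c\<in>{1..n+1}. E c = x}"
    by (simp add: card_Un_disjoint disjoint_iff)
  then show ?thesis
    unfolding chips_upto_def chips_at_def by simp
qed

lemma two_le_chips_at:
  assumes "a \<in> {1..n+1}" "b \<in> {1..n+1}" "a \<noteq> b" "E a = t" "E b = t"
  shows "2 \<le> chips_at n E t"
proof -
  have "card {a, b} \<le> chips_at n E t"
    unfolding chips_at_def using assms by (intro card_mono) auto
  then show ?thesis
    using assms(3) by simp
qed

lemma int_card_fun_upd2:
  fixes E :: "'a \<Rightarrow> 'b"
  assumes "finite A" "a \<in> A" "b \<in> A" "a \<noteq> b"
  shows "int (card {c\<in>A. P ((E(a := u, b := v)) c)}) =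
    int (card {c\<in>A. P (E c)}) - of_bool (P (E a)) - of_bool (P (E b)) + of_bool (P u) + of_bool (P v)"
proof -
  have card_sum: "int (card {c\<in>A. Q c}) = (\<Sum>c\<in>A. of_bool (Q c))" for Q
    using assms(1) by (simp add: Int_def conj_commute)
  have split: "(\<Sum>c\<in>A. f c) = f a + f b + (\<Sum>c\<in>A - {a, b}. f c)" for f :: "'a \<Rightarrow> int"
    using assms by (simp add: sum.remove[of A a] sum.remove[of "A - {a}" b] Diff_insert2 [symmetric])
  have "(\<Sum>c\<in>A - {a, b}. of_bool (P ((E(a := u, b := v)) c)) :: int) = (\<Sum>c\<in>A - {a, b}. of_bool (P (E c)))"
    by (intro sum.cong) auto
  then show ?thesis
    unfolding card_sum using split assms(4) by simp
qed

lemma chips_upto_topple: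
  assumes "a \<in> {1..n+1}" "b \<in> {1..n+1}" "a \<noteq> b" "E a = s" "E b = s"
  shows "chips_upto n (E(a := s - 1, b := s + 1)) x =
    chips_upto n E x + of_bool (x = s - 1) - of_bool (x = s)"
  using int_card_fun_upd2[of "{1..n+1}" a b "\<lambda>y. y \<le> x" E "s - 1" "s + 1"] assms
  unfolding chips_upto_def by auto

lemma chips_at_topple:
  assumes "a \<in> {1..n+1}" "b \<in> {1..n+1}" "a \<noteq> b" "E a = s" "E b = s"
  shows "int (chips_at n (E(a := s - 1, b := s + 1)) t) =
    int (chips_at n E t) + of_bool (t = s - 1) + of_bool (t = s + 1) - 2 * of_bool (t = s)"
  using int_card_fun_upd2[of "{1..n+1}" a b "\<lambda>y. y = t" E "s - 1" "s + 1"] assms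
  unfolding chips_at_def by auto

lemma balanced_sites:
  assumes "balanced n E" "c \<in> {1..n+1}"
  shows "0 \<le> E c \<and> E c \<le> int n + 1"
proof -
  have "chips_upto n E (-1) \<le> 0" "int n + 1 \<le> chips_upto n E (int n + 1)"
    using assms(1) unfolding balanced_def by (auto dest: bspec[of _ _ "-1"] bspec[of _ _ "int n + 1"])
  then have "{c\<in>{1..n+1}. E c \<le> -1} = {}" "card {1..n+1} \<le> card {c\<in>{1..n+1}. E c \<le> int n + 1}"
    unfolding chips_upto_def by auto
  moreover from this(2) have "{c\<in>{1..n+1}. E c \<le> int n + 1} = {1..n+1}"
    by (intro card_seteq) auto
  ultimately show ?thesis
    using assms(2) by force
qed

lemma balanced_chips_at:
  assumes "balanced n E" "2 \<le> chips_at n E s"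
  shows "chips_at n E s = 2 \<and> chips_upto n E (s - 1) = s - 1 \<and> chips_upto n E s = s + 1"
proof -
  have "0 < card {c\<in>{1..n+1}. E c = s}"
    using assms(2) unfolding chips_at_def by linarith
  then have "{c\<in>{1..n+1}. E c = s} \<noteq> {}"
    by (metis card.empty less_irrefl)
  then obtain c where "c \<in> {1..n+1}" "E c = s"
    by blast
  then have "s - 1 \<in> {-1..int n + 1}" "s \<in> {-1..int n + 1}"
    using balanced_sites[OF assms(1)] by fastforce+
  then have "s - 1 \<le> chips_upto n E (s - 1)" "chips_upto n E s \<le> s + 1"
    using assms(1) unfolding balanced_def by auto
  then show ?thesis
    using assms(2) chips_upto_succ[of n E s] by linarith
qed

lemma topple_step_balanced:
  assumes "balanced n E" "topple_step n E E'"
  shows "balanced n E'"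
proof -
  obtain a b where ab: "a \<in> {1..n+1}" "b \<in> {1..n+1}" "a < b" "E a = E b"
    and E': "E' = E(a := E a - 1, b := E a + 1)"
    using assms(2) unfolding topple_step_def by auto
  have "2 \<le> chips_at n E (E a)"
    using two_le_chips_at[OF ab(1,2) less_imp_neq[OF ab(3)] refl ab(4)[symmetric]] .
  then have "chips_upto n E (E a - 1) = E a - 1" "chips_upto n E (E a) = E a + 1"
    using balanced_chips_at assms(1) by blast+
  with assms(1) show ?thesis
    unfolding balanced_def E' chips_upto_topple[OF ab(1,2) less_imp_neq[OF ab(3)] refl ab(4)[symmetric]]
    by auto
qed

lemma topple_steps_balanced:
  "(topple_step n)\<^sup>*\<^sup>* E F \<Longrightarrow> balanced n E \<Longrightarrow> balanced n F"
  by (induction rule: rtranclp_induct) (auto intro: topple_step_balanced)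

lemma balanced_double_site:
  assumes "balanced n E" "a \<in> {1..n+1}" "b \<in> {1..n+1}" "a \<noteq> b" "E a = E b"
  shows "{c\<in>{1..n+1}. E c = E a} = {a, b}"
proof -
  have "2 \<le> chips_at n E (E a)"
    using two_le_chips_at[OF assms(2-4) refl assms(5)[symmetric]] .
  then have "chips_at n E (E a) \<le> 2"
    using balanced_chips_at[OF assms(1)] by simp
  then show ?thesis
    using assms(2-5) unfolding chips_at_def by (intro card_seteq[symmetric]) auto
qed

definition balanced_topple :: "nat \<Rightarrow> (nat \<Rightarrow> int) \<Rightarrow> (nat \<Rightarrow> int) \<Rightarrow> bool" where
  "balanced_topple n E E' \<longleftrightarrow> balanced n E \<and> topple_step n E E'"

lemma strong_confluentp_balanced_topple: "strong_confluentp (balanced_topple n)"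
proof
  fix E E1 E2
  assume "balanced_topple n E E1" "balanced_topple n E E2"
  then obtain a b a' b' where bal: "balanced n E"
    and ab: "a \<in> {1..n+1}" "b \<in> {1..n+1}" "a < b" "E a = E b" "E1 = E(a := E a - 1, b := E b + 1)"
    and ab': "a' \<in> {1..n+1}" "b' \<in> {1..n+1}" "a' < b'" "E a' = E b'" "E2 = E(a' := E a' - 1, b' := E b' + 1)"
    unfolding balanced_topple_def topple_step_def by blast
  show "\<exists>E3. (balanced_topple n)\<^sup>*\<^sup>* E1 E3 \<and> (balanced_topple n)\<^sup>=\<^sup>= E2 E3"
  proof (cases "E a' = E a")
    case True
    have fiber: "{c\<in>{1..n+1}. E c = E a} = {a, b}"
      using balanced_double_site[OF bal ab(1,2) less_imp_neq[OF ab(3)] ab(4)] .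
    have "a' \<in> {c\<in>{1..n+1}. E c = E a}" "b' \<in> {c\<in>{1..n+1}. E c = E a}"
      using True ab'(1,2,4) by simp_all
    then have "a' \<in> {a, b}" "b' \<in> {a, b}"
      unfolding fiber .
    then have "a' = a \<and> b' = b"
      using ab(3) ab'(3) by auto
    then have "E2 = E1"
      using ab ab' by simp
    then show ?thesis
      by blast
  next
    case False
    then have distinct: "a' \<noteq> a" "a' \<noteq> b" "b' \<noteq> a" "b' \<noteq> b"
      using ab(4) ab'(4) by auto
    define E3 where "E3 = E1(a' := E a' - 1, b' := E b' + 1)"
    have "topple_step n E1 E3"
      unfolding topple_step_def E3_def using ab ab' distinct
      by (intro exI[of _ a'] exI[of _ b']) auto
    moreover have "topple_step n E2 E3"
      unfolding topple_step_def E3_def using ab ab' distinct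
      by (intro exI[of _ a] exI[of _ b]) (auto simp: fun_eq_iff)
    moreover have "balanced n E1" "balanced n E2"
      using bal topple_step_balanced \<open>balanced_topple n E E1\<close> \<open>balanced_topple n E E2\<close>
      unfolding balanced_topple_def by blast+
    ultimately show ?thesis
      unfolding balanced_topple_def by blast
  qed
qed

lemma balanced_topple_steps_iff:
  assumes "balanced n E"
  shows "(balanced_topple n)\<^sup>*\<^sup>* E F \<longleftrightarrow> (topple_step n)\<^sup>*\<^sup>* E F"
proof
  show "(topple_step n)\<^sup>*\<^sup>* E F" if "(balanced_topple n)\<^sup>*\<^sup>* E F"
    using that by (induction rule: rtranclp_induct)
      (auto simp: balanced_topple_def intro: rtranclp.rtrancl_into_rtrancl)
  show "(balanced_topple n)\<^sup>*\<^sup>* E F" if "(topple_step n)\<^sup>*\<^sup>* E F"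
    using that
  proof (induction rule: rtranclp_induct)
    case (step F G)
    then show ?case
      using topple_steps_balanced[of n E F] assms unfolding balanced_topple_def
      by (metis (no_types, lifting) rtranclp.rtrancl_into_rtrancl)
  qed simp
qed

lemma stable_topple_steps:
  assumes "stable n F" "(topple_step n)\<^sup>*\<^sup>* F G"
  shows "G = F"
  using assms(2)
proof (cases rule: converse_rtranclpE)
  case (step F')
  then obtain \<alpha> \<beta> where "\<alpha> \<in> {1..n+1}" "\<beta> \<in> {1..n+1}" "\<alpha> < \<beta>" "F \<alpha> = F \<beta>"
    unfolding topple_step_def by blast
  with assms(1) show ?thesis
    unfolding stable_def by (blast dest: less_imp_neq)
qed simp

lemma toppleable_stable_iff:
  assumes "stable n F"
  shows "toppleable n F \<longleftrightarrow> labels_increasing n F"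
  using stable_topple_steps[OF assms] assms unfolding toppleable_def by blast

lemma toppleable_topple_steps_iff:
  assumes "balanced n E" "(topple_step n)\<^sup>*\<^sup>* E E'"
  shows "toppleable n E' \<longleftrightarrow> toppleable n E"
proof
  assume "toppleable n E"
  then obtain F where F: "(topple_step n)\<^sup>*\<^sup>* E F" "stable n F" "labels_increasing n F"
    unfolding toppleable_def by blast
  obtain G where "(balanced_topple n)\<^sup>*\<^sup>* E' G" "(balanced_topple n)\<^sup>*\<^sup>* F G"
    using confluentpD[OF strong_confluentp_imp_confluentp[OF strong_confluentp_balanced_topple]]
      assms F(1) balanced_topple_steps_iff by blast
  then have "(topple_step n)\<^sup>*\<^sup>* E' G" "(topple_step n)\<^sup>*\<^sup>* F G"
    using balanced_topple_steps_iff topple_steps_balanced assms F(1) by blast+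
  then show "toppleable n E'"
    using stable_topple_steps[OF F(2)] F unfolding toppleable_def by blast
next
  assume "toppleable n E'"
  then show "toppleable n E"
    using assms(2) unfolding toppleable_def by (meson rtranclp_trans)
qed

definition frozen_upto :: "nat \<Rightarrow> int \<Rightarrow> (nat \<Rightarrow> int) \<Rightarrow> bool" where
  "frozen_upto n r E \<longleftrightarrow> (\<forall>x\<in>{0..r}. chips_upto n E x = x + 1)"

text \<open>In a balanced configuration a double site \<open>s\<close> has exactly \<open>s - 1\<close> chips to its left, so
  it cannot lie at or left of \<open>r + 1\<close> while the sites \<open>0, \<dots>, r\<close> are frozen.\<close>

lemma topple_step_frozen:
  assumes "balanced n E" "frozen_upto n r E" "topple_step n E E'"
  shows "frozen_upto n r E' \<and> (\<forall>c. E c \<le> r \<longrightarrow> E' c = E c) \<and> (\<forall>c. r < E c \<longrightarrow> r < E' c)"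
proof -
  obtain a b where ab: "a \<in> {1..n+1}" "b \<in> {1..n+1}" "a < b" "E a = E b"
    and E': "E' = E(a := E a - 1, b := E a + 1)"
    using assms(3) unfolding topple_step_def by auto
  have "2 \<le> chips_at n E (E a)"
    using two_le_chips_at[OF ab(1,2) less_imp_neq[OF ab(3)] refl ab(4)[symmetric]] .
  then have "chips_upto n E (E a - 1) = E a - 1"
    using balanced_chips_at[OF assms(1)] by blast
  moreover have "0 \<le> chips_upto n E (E a - 1)"
    unfolding chips_upto_def by simp
  moreover have "E a - 1 \<notin> {0..r}"
    using assms(2) calculation(1) unfolding frozen_upto_def by auto
  ultimately have "r + 2 \<le> E a"
    by auto
  then show ?thesis
    using assms(2) ab(4) unfolding frozen_upto_def E'
    chips_upto_topple[OF ab(1,2) less_imp_neq[OF ab(3)] refl ab(4)[symmetric]] by auto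
qed

lemma topple_steps_frozen:
  assumes "(topple_step n)\<^sup>*\<^sup>* E F" "balanced n E" "frozen_upto n r E"
  shows "(\<forall>c. E c \<le> r \<longrightarrow> F c = E c) \<and> (\<forall>c. r < E c \<longrightarrow> r < F c)"
proof -
  have "balanced n F \<and> frozen_upto n r F \<and> (\<forall>c. E c \<le> r \<longrightarrow> F c = E c) \<and> (\<forall>c. r < E c \<longrightarrow> r < F c)"
    using assms(1)
  proof (induction rule: rtranclp_induct)
    case base
    then show ?case using assms(2,3) by simp
  next
    case (step F G)
    then show ?case
      using topple_step_balanced topple_step_frozen[of n F r G] by (metis order.strict_iff_not)
  qed
  then show ?thesis by blast
qed

lemma card_fiber_bij_betw:
  assumes "bij_betw f A T"
  shows "card {x\<in>A. f x = t} = of_bool (t \<in> T)"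
proof -
  have "f ` {x\<in>A. f x = t} = {t} \<inter> T"
    using assms unfolding bij_betw_def by auto
  moreover have "inj_on f {x\<in>A. f x = t}"
    using bij_betw_imp_inj_on[OF assms] by (rule inj_on_subset) auto
  ultimately have "card {x\<in>A. f x = t} = card ({t} \<inter> T)"
    by (metis card_image)
  then show ?thesis
    by simp
qed

lemma bij_betw_pointwise_le_imp_eq:
  fixes f g :: "'a \<Rightarrow> 'b :: ordered_cancel_comm_monoid_add"
  assumes "finite S" "bij_betw f S T" "bij_betw g S T" "\<forall>x\<in>S. f x \<le> g x"
  shows "\<forall>x\<in>S. g x = f x"
proof (rule ccontr)
  assume "\<not> (\<forall>x\<in>S. g x = f x)"
  then obtain x where "x \<in> S" "f x < g x"
    using assms(4) order.not_eq_order_implies_strict by fastforce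
  then have "sum f S < sum g S"
    using assms(1,4) by (intro sum_strict_mono_ex1) auto
  moreover have "sum f S = sum g S"
    using sum.reindex_bij_betw[OF assms(2), of id] sum.reindex_bij_betw[OF assms(3), of id] by simp
  ultimately show False
    by simp
qed

lemma labels_increasing_spread:
  assumes "labels_increasing n F" "1 \<le> a" "a \<le> c" "c \<le> n + 1"
  shows "F a + int (c - a) \<le> F c"
  using assms(3,4)
proof (induction c rule: dec_induct)
  case (step c)
  then have "F c < F (Suc c)"
    using assms(1,2) unfolding labels_increasing_def by auto
  with step show ?case
    by simp
qed simp

lemma card_2_lessE:
  fixes S :: "'a :: linorder set"
  assumes "card S = 2"
  obtains a b where "S = {a, b}" "a < b"
  using assms unfolding card_2_iff by (metis insert_commute linorder_neqE)

definition block :: "nat \<Rightarrow> (nat \<Rightarrow> int) \<Rightarrow> int \<Rightarrow> int \<Rightarrow> nat set" where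
  "block n E r s = {c\<in>{1..n+1}. r < E c \<and> E c \<le> s}"

text \<open>\<open>left_pass n r s E E' m\<close> records the outcome of a left pass: starting from a double site
  \<open>s\<close> and single sites \<open>r + 1, \<dots>, s - 1\<close>, keep toppling the leftmost double site until a chip
  reaches \<open>r\<close>. The last
  clause says how a lower bound \<open>L\<close> on the sites of the block, increasing in the label, is
  transported through the pass.\<close>

definition left_pass :: "nat \<Rightarrow> int \<Rightarrow> int \<Rightarrow> (nat \<Rightarrow> int) \<Rightarrow> (nat \<Rightarrow> int) \<Rightarrow> nat \<Rightarrow> bool" where
  "left_pass n r s E E' m \<longleftrightarrow> (topple_step n)\<^sup>*\<^sup>* E E' \<and>
     (\<forall>c\<in>{1..n+1} - block n E r s. E' c = E c) \<and>
     m \<in> block n E r s \<and> (\<forall>c\<in>block n E r s. m \<le> c) \<and> E' m = r \<and>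
     bij_betw E' (block n E r s - {m}) {r + 2..s + 1} \<and>
     (\<forall>L :: nat \<Rightarrow> int. strict_mono L \<longrightarrow>
        (\<forall>c\<in>block n E r s. L c \<le> E c) = (\<forall>c\<in>block n E r s - {m}. L c < E' c))"

lemma left_pass_base:
  assumes fiber: "{c\<in>{1..n+1}. E c = s} = {a, b}" and "a < b"
  shows "left_pass n (s - 1) s E (E(a := s - 1, b := s + 1)) a"
proof -
  have ab: "a \<in> {1..n+1}" "b \<in> {1..n+1}" "E a = s" "E b = s"
    using fiber by blast+
  have B: "block n E (s - 1) s = {a, b}"
    unfolding block_def fiber[symmetric] by auto
  have "topple_step n E (E(a := s - 1, b := s + 1))"
    unfolding topple_step_def using ab \<open>a < b\<close> by (intro exI[of _ a] exI[of _ b]) auto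
  moreover have "bij_betw (E(a := s - 1, b := s + 1)) ({a, b} - {a}) {s - 1 + 2..s + 1}"
    using \<open>a < b\<close> by (auto simp: bij_betw_def)
  moreover have "(\<forall>c\<in>{a, b}. L c \<le> E c) = (\<forall>c\<in>{a, b} - {a}. L c < (E(a := s - 1, b := s + 1)) c)"
    if "strict_mono L" for L :: "nat \<Rightarrow> int"
    using strict_monoD[OF that \<open>a < b\<close>] ab \<open>a < b\<close> by auto
  ultimately show ?thesis
    unfolding left_pass_def B using ab \<open>a < b\<close> by auto
qed

lemma block_topple:
  assumes fiber: "{c\<in>{1..n+1}. E c = s} = {a, b}" and "a < b" "r + 1 < s"
  shows "block n (E(a := s - 1, b := s + 1)) r (s - 1) = block n E r s - {b}"
proof (intro set_eqI)
  fix c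
  have ab: "a \<in> {1..n+1}" "b \<in> {1..n+1}" "E a = s" "E b = s"
    using fiber by blast+
  show "c \<in> block n (E(a := s - 1, b := s + 1)) r (s - 1) \<longleftrightarrow> c \<in> block n E r s - {b}"
  proof (cases "c = a \<or> c = b")
    case True
    then show ?thesis
      unfolding block_def using ab \<open>a < b\<close> \<open>r + 1 < s\<close> by auto
  next
    case False
    then have "c \<in> {1..n+1} \<Longrightarrow> E c \<noteq> s"
      using fiber by blast
    with False show ?thesis
      unfolding block_def by auto
  qed
qed

lemma lower_bounds_topple:
  fixes L :: "nat \<Rightarrow> int"
  assumes "strict_mono L" and fiber: "{c\<in>{1..n+1}. E c = s} = {a, b}" and "a < b" "r + 1 < s"
    and "m \<noteq> b" "E' b = s + 1"
    and lower: "(\<forall>c\<in>block n (E(a := s - 1, b := s + 1)) r (s - 1). L c \<le> (E(a := s - 1, b := s + 1)) c) =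
      (\<forall>c\<in>block n (E(a := s - 1, b := s + 1)) r (s - 1) - {m}. L c < E' c)"
  shows "(\<forall>c\<in>block n E r s. L c \<le> E c) = (\<forall>c\<in>block n E r s - {m}. L c < E' c)"
proof -
  define B1 where "B1 = block n (E(a := s - 1, b := s + 1)) r (s - 1)"
  have ab: "a \<in> {1..n+1}" "b \<in> {1..n+1}" "E a = s" "E b = s"
    using fiber by blast+
  have B1: "B1 = block n E r s - {b}" "a \<in> B1" "b \<in> block n E r s"
    unfolding B1_def block_topple[OF fiber \<open>a < b\<close> \<open>r + 1 < s\<close>]
    unfolding block_def using ab \<open>a < b\<close> \<open>r + 1 < s\<close> by auto
  have "L a < L b"
    using \<open>strict_mono L\<close> \<open>a < b\<close> by (rule strict_monoD)
  moreover have "(\<forall>c\<in>B1. L c \<le> (E(a := s - 1, b := s + 1)) c) \<longleftrightarrow>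
      L a \<le> s - 1 \<and> (\<forall>c\<in>B1 - {a}. L c \<le> E c)"
    using B1 \<open>a < b\<close> by auto
  moreover have "block n E r s = insert a (insert b (B1 - {a}))"
    "block n E r s - {m} = insert b (B1 - {m})"
    using B1 \<open>m \<noteq> b\<close> by auto
  ultimately show ?thesis
    using lower ab \<open>E' b = s + 1\<close> unfolding B1_def[symmetric] by auto
qed

lemma left_pass_topple:
  assumes fiber: "{c\<in>{1..n+1}. E c = s} = {a, b}" and "a < b" "r + 1 < s"
    and pass: "left_pass n r (s - 1) (E(a := s - 1, b := s + 1)) E' m"
  shows "left_pass n r s E E' m"
proof -
  define E1 where "E1 = E(a := s - 1, b := s + 1)"
  define B where "B = block n E r s"
  define B1 where "B1 = block n E1 r (s - 1)"
  have ab: "a \<in> {1..n+1}" "b \<in> {1..n+1}" "E a = s" "E b = s"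
    using fiber by blast+
  have B1: "B1 = B - {b}" "a \<in> B1" "b \<in> B"
    unfolding B1_def B_def E1_def block_topple[OF fiber \<open>a < b\<close> \<open>r + 1 < s\<close>]
    unfolding block_def using ab \<open>a < b\<close> \<open>r + 1 < s\<close> by auto
  have steps1: "(topple_step n)\<^sup>*\<^sup>* E1 E'"
    and out1: "\<forall>c\<in>{1..n+1} - B1. E' c = E1 c"
    and m: "m \<in> B1" "\<forall>c\<in>B1. m \<le> c" "E' m = r"
    and bij1: "bij_betw E' (B1 - {m}) {r + 2..s - 1 + 1}"
    and L1: "\<forall>L :: nat \<Rightarrow> int. strict_mono L \<longrightarrow> (\<forall>c\<in>B1. L c \<le> E1 c) = (\<forall>c\<in>B1 - {m}. L c < E' c)"
    using pass unfolding left_pass_def B1_def E1_def by blast+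
  have E'b: "E' b = s + 1"
    using out1 ab B1 \<open>a < b\<close> unfolding E1_def by auto
  have "m < b"
    using m(2) B1(2) \<open>a < b\<close> by force
  have "topple_step n E E1"
    unfolding topple_step_def E1_def using ab \<open>a < b\<close> by (intro exI[of _ a] exI[of _ b]) auto
  then have steps: "(topple_step n)\<^sup>*\<^sup>* E E'"
    using steps1 by (rule converse_rtranclp_into_rtranclp)
  have outside: "\<forall>c\<in>{1..n+1} - B. E' c = E c"
    using out1 B1 unfolding E1_def by auto
  have m_min: "m \<in> B" "\<forall>c\<in>B. m \<le> c"
    using m B1 \<open>m < b\<close> by auto
  have "B - {m} = (B1 - {m}) \<union> {b}" "{r + 2..s + 1} = {r + 2..s - 1 + 1} \<union> {E' b}"
    using B1 \<open>m < b\<close> \<open>r + 1 < s\<close> E'b by auto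
  then have bij: "bij_betw E' (B - {m}) {r + 2..s + 1}"
    using notIn_Un_bij_betw[OF _ _ bij1, of b] B1(1) E'b by auto
  have transport: "\<forall>L :: nat \<Rightarrow> int. strict_mono L \<longrightarrow>
      (\<forall>c\<in>B. L c \<le> E c) = (\<forall>c\<in>B - {m}. L c < E' c)"
  proof (intro allI impI)
    fix L :: "nat \<Rightarrow> int"
    assume "strict_mono L"
    show "(\<forall>c\<in>B. L c \<le> E c) = (\<forall>c\<in>B - {m}. L c < E' c)"
      unfolding B_def
      using lower_bounds_topple[where E' = E' and m = m, OF \<open>strict_mono L\<close> fiber \<open>a < b\<close>
          \<open>r + 1 < s\<close> less_imp_neq[OF \<open>m < b\<close>] E'b]
        L1 \<open>strict_mono L\<close>
      unfolding B1_def E1_def by blast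
  qed
  show ?thesis
    unfolding left_pass_def B_def[symmetric] by (intro conjI steps outside m_min m(3) bij transport)
qed

lemma left_pass_exists:
  assumes "r < s" "chips_at n E s = 2" "\<forall>t. r < t \<longrightarrow> t < s \<longrightarrow> chips_at n E t = 1"
  shows "\<exists>E' m. left_pass n r s E E' m"
  using assms
proof (induction "nat (s - r)" arbitrary: s E)
  case 0
  then show ?case by simp
next
  case (Suc k)
  obtain a b where fiber: "{c\<in>{1..n+1}. E c = s} = {a, b}" and "a < b"
    using Suc.prems(2) unfolding chips_at_def by (rule card_2_lessE)
  have ab: "a \<in> {1..n+1}" "b \<in> {1..n+1}" "E a = s" "E b = s"
    using fiber by blast+
  show ?case
  proof (cases "s = r + 1")
    case True
    then have "r = s - 1"
      by simp
    then show ?thesis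
      using left_pass_base[OF fiber \<open>a < b\<close>] by blast
  next
    case False
    define E1 where "E1 = E(a := s - 1, b := s + 1)"
    have count: "int (chips_at n E1 t) =
      int (chips_at n E t) + of_bool (t = s - 1) + of_bool (t = s + 1) - 2 * of_bool (t = s)" for t
      unfolding E1_def using chips_at_topple[OF ab(1,2) _ ab(3,4)] \<open>a < b\<close> by simp
    have "chips_at n E (s - 1) = 1"
      using Suc.prems(1,3) False by simp
    then have "chips_at n E1 (s - 1) = 2"
      using count[of "s - 1"] by simp
    moreover have "\<forall>t. r < t \<longrightarrow> t < s - 1 \<longrightarrow> chips_at n E1 t = 1"
    proof (intro allI impI)
      fix t
      assume "r < t" "t < s - 1"
      then show "chips_at n E1 t = 1"
        using count[of t] Suc.prems(3) by simp
    qed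
    moreover have "k = nat (s - 1 - r)" "r < s - 1"
      using Suc.hyps(2) Suc.prems(1) False by auto
    ultimately obtain E' m where "left_pass n r (s - 1) E1 E' m"
      using Suc.hyps(1) by blast
    then have "left_pass n r s E E' m"
      unfolding E1_def using left_pass_topple[OF fiber \<open>a < b\<close>] Suc.prems(1) False by simp
    then show ?thesis
      by blast
  qed
qed

lemma chips_at_left_pass:
  assumes "left_pass n r s E E' m"
  shows "chips_at n E' t =
    of_bool (t = r \<or> (r + 2 \<le> t \<and> t \<le> s + 1)) + (if r < t \<and> t \<le> s then 0 else chips_at n E t)"
proof -
  let ?B = "block n E r s"
  have out: "\<forall>c\<in>{1..n+1} - ?B. E' c = E c" and m: "m \<in> ?B" "E' m = r"
    and bij: "bij_betw E' (?B - {m}) {r + 2..s + 1}"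
    using assms unfolding left_pass_def by blast+
  have B: "?B \<subseteq> {1..n+1}"
    unfolding block_def by auto
  have "{c\<in>{1..n+1}. E' c = t} =
      ({c\<in>?B - {m}. E' c = t} \<union> {c. c = m \<and> t = r}) \<union> {c\<in>{1..n+1} - ?B. E c = t}"
    using out m B by auto
  moreover have "card {c\<in>?B - {m}. E' c = t} = of_bool (r + 2 \<le> t \<and> t \<le> s + 1)"
    using card_fiber_bij_betw[OF bij] by simp
  moreover have "card {c. c = m \<and> t = r} = of_bool (t = r)"
    by simp
  moreover have "{c\<in>{1..n+1} - ?B. E c = t} = (if r < t \<and> t \<le> s then {} else {c\<in>{1..n+1}. E c = t})"
    unfolding block_def by auto
  moreover have "finite {c\<in>?B - {m}. E' c = t}" "finite {c\<in>{1..n+1} - ?B. E c = t}"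
    using B by (auto intro: finite_subset)
  moreover have "{c\<in>?B - {m}. E' c = t} \<inter> {c. c = m \<and> t = r} = {}"
    "({c\<in>?B - {m}. E' c = t} \<union> {c. c = m \<and> t = r}) \<inter> {c\<in>{1..n+1} - ?B. E c = t} = {}"
    using m bij_betw_apply[OF bij] by auto
  ultimately show ?thesis
    unfolding chips_at_def by (simp add: card_Un_disjoint)
qed

lemma chips_upto_in_S:
  assumes "in_S n p C" "1 \<le> p" "p \<le> n" "k \<le> n + 1"
  shows "chips_upto n C (int k) = int k + of_bool (p \<le> k \<and> k \<le> n)"
  using assms(4)
proof (induction k)
  case 0
  have "{c\<in>{1..n+1}. C c \<le> 0} = {}"
    using assms(1) unfolding in_S_def by fastforce
  then show ?case
    using assms(2) unfolding chips_upto_def by simp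
next
  case (Suc k)
  have "chips_at n C (int (Suc k)) = (if Suc k \<le> n then (if Suc k = p then 2 else 1) else 0)"
  proof (cases "Suc k \<le> n")
    case True
    then have "Suc k \<in> {1..n}"
      by simp
    then have "card {c\<in>{1..n+1}. C c = int (Suc k)} = (if Suc k = p then 2 else 1)"
      using assms(1) unfolding in_S_def by blast
    then show ?thesis
      using True unfolding chips_at_def by simp
  next
    case False
    then have "{c\<in>{1..n+1}. C c = int (Suc k)} = {}"
      using assms(1) unfolding in_S_def by fastforce
    then show ?thesis
      using False unfolding chips_at_def by simp
  qed
  then show ?case
    using Suc chips_upto_succ[of n C "int (Suc k)"] assms(2,3) by auto
qed

lemma in_S_balanced:
  assumes "in_S n p C" "1 \<le> p" "p \<le> n"
  shows "balanced n C"
  unfolding balanced_def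
proof
  fix x :: int
  assume x: "x \<in> {-1..int n + 1}"
  show "x \<le> chips_upto n C x \<and> chips_upto n C x \<le> x + 1"
  proof (cases "x = -1")
    case True
    have "{c\<in>{1..n+1}. C c \<le> -1} = {}"
      using assms(1) unfolding in_S_def by fastforce
    then show ?thesis
      using True unfolding chips_upto_def by simp
  next
    case False
    then have "x = int (nat x)" "nat x \<le> n + 1"
      using x by auto
    then show ?thesis
      using chips_upto_in_S[OF assms, of "nat x"] by simp
  qed
qed

text \<open>After \<open>r\<close> passes the chips \<open>1, \<dots>, r\<close> sit in order on the sites \<open>0, \<dots>, r - 1\<close>, site \<open>r\<close>
  is empty, and the remaining chips occupy the sites \<open>r + 1, \<dots>, n\<close> like a configuration of
  \<open>\<S>(n - r, p)\<close> shifted by \<open>r\<close>; for \<open>r = 0\<close> this is just membership in \<open>\<S>(n, p)\<close>.\<close>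

definition after_passes :: "nat \<Rightarrow> nat \<Rightarrow> nat \<Rightarrow> (nat \<Rightarrow> int) \<Rightarrow> bool" where
  "after_passes n p r E \<longleftrightarrow>
     (\<forall>c\<in>{1..n+1}. c \<le> r \<longrightarrow> E c = int c - 1) \<and>
     (\<forall>c\<in>{1..n+1}. r < c \<longrightarrow> int r < E c \<and> E c \<le> int n) \<and>
     (\<forall>t. int r < t \<longrightarrow> t \<le> int n \<longrightarrow> chips_at n E t = (if t = int p + int r then 2 else 1))"

definition in_windows :: "nat \<Rightarrow> nat \<Rightarrow> nat \<Rightarrow> (nat \<Rightarrow> int) \<Rightarrow> bool" where
  "in_windows n p r E \<longleftrightarrow>
     (\<forall>i\<in>{r+1..n+1}. int p + int i - int n - 1 + int r \<le> E i \<and> E i \<le> int p + int i - 1)"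

lemma in_S_after_passes:
  assumes "in_S n p C"
  shows "after_passes n p 0 C"
proof -
  have "\<forall>c\<in>{1..n+1}. 0 < C c \<and> C c \<le> int n"
    using assms unfolding in_S_def by force
  moreover have "chips_at n C t = (if t = int p then 2 else 1)" if "0 < t" "t \<le> int n" for t
  proof -
    have "nat t \<in> {1..n}" "t = int (nat t)"
      using that by auto
    then have "card {c\<in>{1..n+1}. C c = int (nat t)} = (if nat t = p then 2 else 1)"
      using assms unfolding in_S_def by blast
    moreover have "nat t = p \<longleftrightarrow> t = int p"
      using \<open>t = int (nat t)\<close> by (metis nat_int)
    ultimately show ?thesis
      unfolding chips_at_def using \<open>t = int (nat t)\<close> by simp
  qed
  ultimately show ?thesis
    unfolding after_passes_def by auto
qed

lemma after_passes_left_pass: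
  assumes "after_passes n p r E" "1 \<le> p" "p + r \<le> n"
  shows "\<exists>E' m. left_pass n (int r) (int p + int r) E E' m"
proof (rule left_pass_exists)
  show "int r < int p + int r"
    using assms(2) by simp
  show "chips_at n E (int p + int r) = 2"
    using assms unfolding after_passes_def by auto
  show "\<forall>t. int r < t \<longrightarrow> t < int p + int r \<longrightarrow> chips_at n E t = 1"
    using assms unfolding after_passes_def by auto
qed

lemma after_passes_block:
  assumes "after_passes n p r E" "c \<in> {1..n+1}"
  shows "c \<in> block n E (int r) s \<longleftrightarrow> r < c \<and> E c \<le> s"
  using assms unfolding after_passes_def block_def by (cases "c \<le> r") auto

lemma after_passes_block_subset:
  assumes "after_passes n p r E"
  shows "block n E (int r) s \<subseteq> {r+1..n+1}"
proof
  fix c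
  assume c: "c \<in> block n E (int r) s"
  then have "c \<in> {1..n+1}"
    unfolding block_def by simp
  with c show "c \<in> {r+1..n+1}"
    using after_passes_block[OF assms] by auto
qed

lemma after_pass_sites:
  assumes W: "after_passes n p r E" and "1 \<le> p"
    and pass: "left_pass n (int r) (int p + int r) E E' m"
  shows "m \<in> {1..n+1}" "r < m"
    and "\<forall>c\<in>{1..n+1}. c \<le> r \<longrightarrow> E' c = int c - 1"
    and "\<forall>c\<in>{1..n+1}. r < c \<longrightarrow> c \<noteq> m \<longrightarrow> int r + 2 \<le> E' c"
proof -
  let ?B = "block n E (int r) (int p + int r)"
  have out: "\<forall>c\<in>{1..n+1} - ?B. E' c = E c" and "m \<in> ?B"
    and bij: "bij_betw E' (?B - {m}) {int r + 2..int p + int r + 1}"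
    using pass unfolding left_pass_def by blast+
  then show "m \<in> {1..n+1}" "r < m"
    using after_passes_block[OF W] unfolding block_def by auto
  show "\<forall>c\<in>{1..n+1}. c \<le> r \<longrightarrow> E' c = int c - 1"
    using out W after_passes_block[OF W] unfolding after_passes_def by auto
  show "\<forall>c\<in>{1..n+1}. r < c \<longrightarrow> c \<noteq> m \<longrightarrow> int r + 2 \<le> E' c"
  proof (intro ballI impI)
    fix c
    assume c: "c \<in> {1..n+1}" "r < c" "c \<noteq> m"
    show "int r + 2 \<le> E' c"
    proof (cases "c \<in> ?B")
      case True
      then show ?thesis
        using bij_betw_apply[OF bij, of c] c(3) by auto
    next
      case False
      then show ?thesis
        using out c \<open>1 \<le> p\<close> after_passes_block[OF W c(1)] by auto
    qed
  qed
qed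

lemma after_pass_sites_upto_r:
  assumes W: "after_passes n p r E" and "1 \<le> p"
    and pass: "left_pass n (int r) (int p + int r) E E' m"
    and "c \<in> {1..n+1}" "x \<le> int r"
  shows "E' c \<le> x \<longleftrightarrow> (c \<le> r \<and> int c \<le> x + 1) \<or> (c = m \<and> x = int r)"
proof -
  have m: "r < m"
    and low: "\<forall>c\<in>{1..n+1}. c \<le> r \<longrightarrow> E' c = int c - 1"
    and high: "\<forall>c\<in>{1..n+1}. r < c \<longrightarrow> c \<noteq> m \<longrightarrow> int r + 2 \<le> E' c"
    using after_pass_sites[OF W \<open>1 \<le> p\<close> pass] by blast+
  have "E' m = int r"
    using pass unfolding left_pass_def by blast
  show ?thesis
  proof (cases "c \<le> r")
    case True
    then show ?thesis
      using low assms(4,5) m by auto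
  next
    case False
    then have "c \<noteq> m \<Longrightarrow> int r + 2 \<le> E' c"
      using high assms(4) by simp
    then show ?thesis
      using False assms(5) \<open>E' m = int r\<close> by (cases "c = m") auto
  qed
qed

lemma after_pass_frozen:
  assumes W: "after_passes n p r E" and "1 \<le> p"
    and pass: "left_pass n (int r) (int p + int r) E E' m"
  shows "frozen_upto n (int r) E'"
  unfolding frozen_upto_def
proof
  fix x
  assume x: "x \<in> {0..int r}"
  have m: "m \<in> {1..n+1}" "r < m"
    using after_pass_sites[OF W \<open>1 \<le> p\<close> pass] by blast+
  note sites = after_pass_sites_upto_r[OF W \<open>1 \<le> p\<close> pass]
  consider "x < int r" | "x = int r"
    using x by fastforce
  then show "chips_upto n E' x = x + 1"
  proof cases
    case 1
    have "{c\<in>{1..n+1}. E' c \<le> x} = {1..nat x + 1}"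
    proof (intro set_eqI)
      fix c
      have "c \<in> {1..nat x + 1} \<Longrightarrow> c \<in> {1..n+1}"
        using x m 1 by auto
      then show "c \<in> {c\<in>{1..n+1}. E' c \<le> x} \<longleftrightarrow> c \<in> {1..nat x + 1}"
        using sites[of c x] x 1 by auto
    qed
    then show ?thesis
      unfolding chips_upto_def using x by simp
  next
    case 2
    have "{c\<in>{1..n+1}. E' c \<le> x} = insert m {1..r}"
    proof (intro set_eqI)
      fix c
      have "c \<in> insert m {1..r} \<Longrightarrow> c \<in> {1..n+1}"
        using m by auto
      then show "c \<in> {c\<in>{1..n+1}. E' c \<le> x} \<longleftrightarrow> c \<in> insert m {1..r}"
        using sites[of c x] 2 by auto
    qed
    then show ?thesis
      unfolding chips_upto_def using 2 m(2) by simp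
  qed
qed

lemma after_pass_stuck:
  assumes W: "after_passes n p r E" and "1 \<le> p"
    and pass: "left_pass n (int r) (int p + int r) E E' m" and "m \<noteq> r + 1" and "balanced n E'"
  shows "\<not> toppleable n E'"
proof
  assume "toppleable n E'"
  then obtain F where F: "(topple_step n)\<^sup>*\<^sup>* E' F" "labels_increasing n F"
    unfolding toppleable_def by blast
  have m: "m \<in> {1..n+1}" "r < m"
    and high: "\<forall>c\<in>{1..n+1}. r < c \<longrightarrow> c \<noteq> m \<longrightarrow> int r + 2 \<le> E' c"
    using after_pass_sites[OF W \<open>1 \<le> p\<close> pass] by blast+
  have "E' m = int r"
    using pass unfolding left_pass_def by blast
  have "\<forall>c. E' c \<le> int r \<longrightarrow> F c = E' c" "\<forall>c. int r < E' c \<longrightarrow> int r < F c"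
    using topple_steps_frozen[OF F(1) \<open>balanced n E'\<close> after_pass_frozen[OF W \<open>1 \<le> p\<close> pass]]
    by blast+
  moreover have "r + 1 \<in> {1..n+1}" "r + 1 < m"
    using m \<open>m \<noteq> r + 1\<close> by auto
  ultimately have "F m = int r" "int r < F (r + 1)"
    using m high \<open>E' m = int r\<close> by auto
  moreover have "F (r + 1) < F m"
    using F(2) \<open>r + 1 \<in> {1..n+1}\<close> \<open>r + 1 < m\<close> m(1) unfolding labels_increasing_def by blast
  ultimately show False
    by simp
qed

lemma in_windows_after_pass_min:
  assumes W: "after_passes n p r E" and "1 \<le> p"
    and pass: "left_pass n (int r) (int p + int r) E E' m" and "in_windows n p r E"
  shows "m = r + 1"
proof -
  have m: "m \<in> {1..n+1}" "r < m"
    using after_pass_sites[OF W \<open>1 \<le> p\<close> pass] by blast+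
  then have "r + 1 \<in> {1..n+1}"
    by simp
  moreover have "E (r + 1) \<le> int p + int r"
    using bspec[OF \<open>in_windows n p r E\<close>[unfolded in_windows_def], of "r + 1"] m by simp
  ultimately have "r + 1 \<in> block n E (int r) (int p + int r)"
    using after_passes_block[OF W] by simp
  then have "m \<le> r + 1"
    using pass unfolding left_pass_def by blast
  with m show ?thesis
    by simp
qed

lemma in_windows_iff_block:
  assumes W: "after_passes n p r E"
  shows "in_windows n p r E \<longleftrightarrow>
    (\<forall>c\<in>block n E (int r) (int p + int r). int p + int c - int n - 1 + int r \<le> E c) \<and>
    (\<forall>c\<in>{r+1..n+1} - block n E (int r) (int p + int r). E c \<le> int p + int c - 1)"
  (is "_ \<longleftrightarrow> ?rhs")
proof -
  let ?B = "block n E (int r) (int p + int r)"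
  have B: "c \<in> ?B \<longleftrightarrow> r < c \<and> E c \<le> int p + int r" if "c \<in> {1..n+1}" for c
    using after_passes_block[OF W that] .
  have "?B \<subseteq> {r+1..n+1}"
    using after_passes_block_subset[OF W] .
  have "in_windows n p r E \<longleftrightarrow> (\<forall>i\<in>{r+1..n+1}. if i \<in> ?B
      then int p + int i - int n - 1 + int r \<le> E i else E i \<le> int p + int i - 1)"
    unfolding in_windows_def
  proof (rule ball_cong[OF refl])
    fix i
    assume "i \<in> {r+1..n+1}"
    then show "(int p + int i - int n - 1 + int r \<le> E i \<and> E i \<le> int p + int i - 1) \<longleftrightarrow>
        (if i \<in> ?B then int p + int i - int n - 1 + int r \<le> E i else E i \<le> int p + int i - 1)"
      using B[of i] by auto
  qed
  also have "\<dots> \<longleftrightarrow> ?rhs"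
    using \<open>?B \<subseteq> {r+1..n+1}\<close> by auto
  finally show ?thesis .
qed

lemma in_windows_after_pass_iff_block:
  assumes W: "after_passes n p r E"
    and pass: "left_pass n (int r) (int p + int r) E E' (r + 1)"
  shows "in_windows n p (r + 1) E' \<longleftrightarrow>
    (\<forall>c\<in>block n E (int r) (int p + int r) - {r + 1}. int p + int c - int n - 1 + int r < E' c) \<and>
    (\<forall>c\<in>{r+1..n+1} - block n E (int r) (int p + int r). E c \<le> int p + int c - 1)"
  (is "_ \<longleftrightarrow> ?rhs")
proof -
  let ?B = "block n E (int r) (int p + int r)"
  have B: "c \<in> ?B \<longleftrightarrow> r < c \<and> E c \<le> int p + int r" if "c \<in> {1..n+1}" for c
    using after_passes_block[OF W that] .
  have "?B \<subseteq> {r+1..n+1}"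
    using after_passes_block_subset[OF W] .
  have out: "\<forall>c\<in>{1..n+1} - ?B. E' c = E c" and "r + 1 \<in> ?B"
    and bij: "bij_betw E' (?B - {r + 1}) {int r + 2..int p + int r + 1}"
    using pass unfolding left_pass_def by blast+
  have "in_windows n p (r + 1) E' \<longleftrightarrow> (\<forall>i\<in>{r+1+1..n+1}. if i \<in> ?B
      then int p + int i - int n - 1 + int r < E' i else E i \<le> int p + int i - 1)"
    unfolding in_windows_def
  proof (rule ball_cong[OF refl])
    fix i
    assume i: "i \<in> {r+1+1..n+1}"
    show "(int p + int i - int n - 1 + int (r + 1) \<le> E' i \<and> E' i \<le> int p + int i - 1) \<longleftrightarrow>
        (if i \<in> ?B then int p + int i - int n - 1 + int r < E' i else E i \<le> int p + int i - 1)"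
    proof (cases "i \<in> ?B")
      case True
      then have "E' i \<le> int p + int r + 1"
        using bij_betw_apply[OF bij, of i] i by auto
      with True i show ?thesis
        by auto
    next
      case False
      then show ?thesis
        using out B[of i] i by auto
    qed
  qed
  also have "\<dots> \<longleftrightarrow> ?rhs"
  proof -
    have "?B - {r + 1} = {r+1+1..n+1} \<inter> ?B"
      using \<open>?B \<subseteq> {r+1..n+1}\<close> by auto
    moreover have "{r+1..n+1} - ?B = {r+1+1..n+1} - ?B"
      using \<open>r + 1 \<in> ?B\<close> by (auto simp: le_less)
    ultimately show ?thesis
      by auto
  qed
  finally show ?thesis .
qed

lemma in_windows_after_pass:
  assumes W: "after_passes n p r E"
    and pass: "left_pass n (int r) (int p + int r) E E' (r + 1)"
  shows "in_windows n p r E \<longleftrightarrow> in_windows n p (r + 1) E'"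
proof -
  have "strict_mono (\<lambda>c :: nat. int p + int c - int n - 1 + int r)"
    by (rule strict_monoI) simp
  then have transport: "(\<forall>c\<in>block n E (int r) (int p + int r). int p + int c - int n - 1 + int r \<le> E c) \<longleftrightarrow>
      (\<forall>c\<in>block n E (int r) (int p + int r) - {r + 1}. int p + int c - int n - 1 + int r < E' c)"
    using pass unfolding left_pass_def by blast
  show ?thesis
    unfolding in_windows_iff_block[OF W] in_windows_after_pass_iff_block[OF W pass] transport ..
qed

lemma after_pass_prefix:
  assumes "after_passes n p r E" "1 \<le> p" "left_pass n (int r) (int p + int r) E E' (r + 1)"
  shows "\<forall>c\<in>{1..n+1}. c \<le> r + 1 \<longrightarrow> E' c = int c - 1"
proof -
  have "\<forall>c\<in>{1..n+1}. c \<le> r \<longrightarrow> E' c = int c - 1"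
    using after_pass_sites[OF assms] by blast
  moreover have "E' (r + 1) = int r"
    using assms(3) unfolding left_pass_def by blast
  ultimately show ?thesis
    by (auto simp: le_Suc_eq)
qed

lemma after_passes_after_pass:
  assumes W: "after_passes n p r E" and "1 \<le> p" "p + r < n"
    and pass: "left_pass n (int r) (int p + int r) E E' (r + 1)"
  shows "after_passes n p (r + 1) E'"
proof -
  let ?B = "block n E (int r) (int p + int r)"
  have out: "\<forall>c\<in>{1..n+1} - ?B. E' c = E c"
    and bij: "bij_betw E' (?B - {r + 1}) {int r + 2..int p + int r + 1}"
    using pass unfolding left_pass_def by blast+
  have "\<forall>c\<in>{1..n+1}. r + 1 < c \<longrightarrow> int (r + 1) < E' c \<and> E' c \<le> int n"
  proof (intro ballI impI)
    fix c
    assume c: "c \<in> {1..n+1}" "r + 1 < c"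
    have "int r + 2 \<le> E' c"
      using after_pass_sites(4)[OF W \<open>1 \<le> p\<close> pass] c by simp
    moreover have "E' c \<le> int n"
    proof (cases "c \<in> ?B")
      case True
      then show ?thesis
        using bij_betw_apply[OF bij, of c] c \<open>p + r < n\<close> by auto
    next
      case False
      then show ?thesis
        using out c W unfolding after_passes_def by auto
    qed
    ultimately show "int (r + 1) < E' c \<and> E' c \<le> int n"
      by simp
  qed
  moreover have "chips_at n E' t = (if t = int p + int (r + 1) then 2 else 1)"
    if "int (r + 1) < t" "t \<le> int n" for t
  proof -
    have "chips_at n E t = (if t = int p + int r then 2 else 1)"
      using W that unfolding after_passes_def by auto
    then show ?thesis
      using chips_at_left_pass[OF pass, of t] that \<open>1 \<le> p\<close> by auto
  qed
  ultimately show ?thesis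
    unfolding after_passes_def using after_pass_prefix[OF W \<open>1 \<le> p\<close> pass] by blast
qed

lemma bij_suffix_stable:
  assumes low: "\<forall>c\<in>{1..n+1}. c \<le> k \<longrightarrow> E c = int c - 1"
    and bij: "bij_betw E {k+1..n+1} (int ` {k+1..n+1})"
  shows "stable n E"
  unfolding stable_def
proof (intro ballI impI)
  fix a b
  assume ab: "a \<in> {1..n+1}" "b \<in> {1..n+1}" "a \<noteq> b"
  have high: "int k + 1 \<le> E c" if "c \<in> {k+1..n+1}" for c
    using bij_betw_apply[OF bij that] unfolding image_int_atLeastAtMost by simp
  have "c \<le> k \<or> c \<in> {k+1..n+1}" if "c \<in> {1..n+1}" for c
    using that by auto
  then consider "a \<le> k" "b \<le> k" | "a \<le> k" "b \<in> {k+1..n+1}" | "a \<in> {k+1..n+1}" "b \<le> k"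
    | "a \<in> {k+1..n+1}" "b \<in> {k+1..n+1}"
    using ab(1,2) by blast
  then show "E a \<noteq> E b"
  proof cases
    case 1
    then show ?thesis
      using low ab by auto
  next
    case 2
    then show ?thesis
      using low ab(1) high[of b] by auto
  next
    case 3
    then show ?thesis
      using low ab(2) high[of a] by auto
  next
    case 4
    then show ?thesis
      using bij_betw_imp_inj_on[OF bij] ab(3) by (auto dest: inj_onD)
  qed
qed

text \<open>A permutation of the sites \<open>k + 1, \<dots>, n + 1\<close> is increasing iff it is the identity iff it
  moves no chip to the left (the last by comparing sums).\<close>

lemma bij_suffix_labels_increasing_iff:
  assumes low: "\<forall>c\<in>{1..n+1}. c \<le> k \<longrightarrow> E c = int c - 1"
    and bij: "bij_betw E {k+1..n+1} (int ` {k+1..n+1})"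
  shows "labels_increasing n E \<longleftrightarrow> (\<forall>c\<in>{k+1..n+1}. int c \<le> E c)"
proof
  assume inc: "labels_increasing n E"
  show "\<forall>c\<in>{k+1..n+1}. int c \<le> E c"
  proof
    fix c
    assume c: "c \<in> {k+1..n+1}"
    then have "E (k + 1) + int (c - (k + 1)) \<le> E c" "E (k + 1) \<in> int ` {k+1..n+1}"
      using labels_increasing_spread[OF inc, of "k + 1" c] bij_betw_apply[OF bij, of "k + 1"] by auto
    then show "int c \<le> E c"
      using c unfolding image_int_atLeastAtMost by auto
  qed
next
  assume "\<forall>c\<in>{k+1..n+1}. int c \<le> E c"
  then have "\<forall>c\<in>{k+1..n+1}. E c = int c"
    using bij_betw_pointwise_le_imp_eq[OF _ _ bij] inj_on_imp_bij_betw[of int "{k+1..n+1}"] by auto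
  then have "E c = (if c \<le> k then int c - 1 else int c)" if "c \<in> {1..n+1}" for c
    using low that by auto
  then show "labels_increasing n E"
    unfolding labels_increasing_def by auto
qed

lemma after_passes_last_block:
  assumes W: "after_passes n p r E" and "p + r = n"
  shows "block n E (int r) (int p + int r) = {r + 1..n + 1}"
proof (intro set_eqI iffI)
  fix c
  assume "c \<in> block n E (int r) (int p + int r)"
  then show "c \<in> {r + 1..n + 1}"
    using after_passes_block_subset[OF W] by blast
next
  fix c
  assume "c \<in> {r + 1..n + 1}"
  then have "c \<in> {1..n+1}" "r < c"
    by auto
  moreover from this have "E c \<le> int n"
    using W unfolding after_passes_def by blast
  ultimately show "c \<in> block n E (int r) (int p + int r)"
    using after_passes_block[OF W] \<open>p + r = n\<close> by auto
qed

lemma last_pass_toppleable_iff: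
  assumes W: "after_passes n p r E" and "1 \<le> p" "p + r = n"
    and pass: "left_pass n (int r) (int p + int r) E E' (r + 1)"
  shows "toppleable n E' \<longleftrightarrow> in_windows n p (r + 1) E'"
proof -
  let ?S = "{r + 1 + 1..n + 1}"
  have low: "\<forall>c\<in>{1..n+1}. c \<le> r + 1 \<longrightarrow> E' c = int c - 1"
    using after_pass_prefix[OF W \<open>1 \<le> p\<close> pass] .
  have "bij_betw E' (block n E (int r) (int p + int r) - {r + 1}) {int r + 2..int p + int r + 1}"
    using pass unfolding left_pass_def by blast
  moreover have "block n E (int r) (int p + int r) - {r + 1} = ?S"
    using after_passes_last_block[OF W \<open>p + r = n\<close>] by auto
  moreover have "int ` ?S = {int r + 2..int p + int r + 1}"
    unfolding image_int_atLeastAtMost using \<open>p + r = n\<close> by auto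
  ultimately have bij: "bij_betw E' ?S (int ` ?S)"
    by simp
  have "toppleable n E' \<longleftrightarrow> (\<forall>c\<in>?S. int c \<le> E' c)"
    using toppleable_stable_iff[OF bij_suffix_stable[OF low bij]]
      bij_suffix_labels_increasing_iff[OF low bij] by simp
  also have "\<dots> \<longleftrightarrow> in_windows n p (r + 1) E'"
    unfolding in_windows_def
  proof (rule ball_cong[OF refl])
    fix c
    assume "c \<in> ?S"
    then have "E' c \<in> int ` ?S"
      using bij_betw_apply[OF bij] by blast
    then show "int c \<le> E' c \<longleftrightarrow>
        int p + int c - int n - 1 + int (r + 1) \<le> E' c \<and> E' c \<le> int p + int c - 1"
      using \<open>c \<in> ?S\<close> \<open>p + r = n\<close> unfolding image_int_atLeastAtMost by auto
  qed
  finally show ?thesis .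
qed

lemma toppleable_iff_in_windows:
  assumes "balanced n E" "after_passes n p r E" "1 \<le> p" "p + r \<le> n"
  shows "toppleable n E \<longleftrightarrow> in_windows n p r E"
  using assms
proof (induction "n - (p + r)" arbitrary: r E rule: less_induct)
  case less
  obtain E' m where pass: "left_pass n (int r) (int p + int r) E E' m"
    using after_passes_left_pass less.prems(2-4) by blast
  then have steps: "(topple_step n)\<^sup>*\<^sup>* E E'"
    unfolding left_pass_def by blast
  then have "balanced n E'" and toppleable: "toppleable n E \<longleftrightarrow> toppleable n E'"
    using topple_steps_balanced toppleable_topple_steps_iff less.prems(1) by blast+
  show ?case
  proof (cases "m = r + 1")
    case False
    then show ?thesis
      using toppleable after_pass_stuck[OF less.prems(2,3) pass False \<open>balanced n E'\<close>]
        in_windows_after_pass_min[OF less.prems(2,3) pass] by blast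
  next
    case True
    then have pass: "left_pass n (int r) (int p + int r) E E' (r + 1)"
      using pass by simp
    have windows: "in_windows n p r E \<longleftrightarrow> in_windows n p (r + 1) E'"
      using in_windows_after_pass[OF less.prems(2) pass] .
    show ?thesis
    proof (cases "p + r = n")
      case True
      then show ?thesis
        using toppleable windows last_pass_toppleable_iff[OF less.prems(2,3) True pass] by blast
    next
      case False
      then have "after_passes n p (r + 1) E'"
        using after_passes_after_pass[OF less.prems(2,3) _ pass] less.prems(4) by simp
      then have "toppleable n E' \<longleftrightarrow> in_windows n p (r + 1) E'"
        using less.hyps[of "r + 1" E'] \<open>balanced n E'\<close> less.prems(3,4) False by simp
      then show ?thesis
        using toppleable windows by blast
    qed
  qed
qed

theorem theorem4p2:
  fixes n p :: nat and C :: "nat \<Rightarrow> int"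
  assumes "n \<ge> 1" and "1 \<le> p" and "p \<le> n" and "in_S n p C"
  shows "toppleable n C \<longleftrightarrow>
    (\<forall>i\<in>{1..n+1}. int p + int i - int n - 1 \<le> C i \<and> C i \<le> int p + int i - 1)"
proof -
  have "toppleable n C \<longleftrightarrow> in_windows n p 0 C"
    using toppleable_iff_in_windows[OF in_S_balanced[OF assms(4,2,3)] in_S_after_passes[OF assms(4)]]
      assms(2,3) by simp
  then show ?thesis
    unfolding in_windows_def by simp
qed

end
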